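(* Let $1\le d<n$, $r=d(n-d)$, and let $t_1,\dots,t_k\in\{1,\dots,r-1\}$. If $\mathfrak C=F_{t_1}F_{t_2}\cdots F_{t_k}(\mathfrak C_{\mathrm{right}})$ is a maximal chain (in particular nonzero), then $\sigma_{\mathfrak C}=s_{t_k}s_{t_{k-1}}\cdots s_{t_1}$, and this is a reduced expression in $\mathsf S_r$.
   Context: $I(d,n)$: $d$-subsets of $\{1,\dots,n\}$ as increasing sequences, ordered by $\underline i\le\underline j$ iff $i_k\le j_k$ for all $k$. Maximal chains $\underline i_r>\cdots>\underline i_0$; chains compared lexicographically via concatenated strings $\underline i_r\cdots\underline i_0$; $\mathfrak C_{\mathrm{right}}$ the smallest. Root operators $f_{s,h}$ ($1\le h\le d$, $h\le s<n-d+h$): $f_{s,h}(i_1\cdots i_d)$ replaces $i_h=s$ by $s+1$ if $i_h=s$ and ($h=d$ or $i_{h+1}\ge s+2$), else $0$. Along a maximal chain $\underline i_t=f_{s_t,h_t}(\underline i_{t-1})$, each admissible pair occurring exactly once; $\tilde f_t:=f_{s_t,h_t}$ for $\mathfrak C_{\mathrm{right}}$; $\sigma_{\mathfrak C}\in\mathsf S_r$ is defined by: the operator from $\underline i_{t-1}$ to $\underline i_t$ in $\mathfrak C$ is $\tilde f_{\sigma_{\mathfrak C}(t)}$. For $1\le t\le r-1$, if the Bruhat interval $[\underline i_{t-1},\underline i_{t+1}]$ has 4 elements $\{\underline i_{t-1},\underline i_t,\underline i'_t,\underline i_{t+1}\}$ and $\underline i'_t>_{lex}\underline i_t$ (right peak),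 $F_t(\mathfrak C)$ is the chain with $\underline i_t$ replaced by $\underline i'_t$; otherwise $F_t(\mathfrak C)=0$, and $F_t(0)=0$. $s_t=(t,t+1)\in\mathsf S_r$. *)

theory Defs
  imports Main
begin

definition Idn :: "nat \<Rightarrow> nat \<Rightarrow> nat list set" where
  "Idn d n = {xs. length xs = d \<and> sorted_wrt (<) xs \<and> set xs \<subseteq> {1..n}}"

definition bleq :: "nat list \<Rightarrow> nat list \<Rightarrow> bool" where
  "bleq a b \<longleftrightarrow> length a = length b \<and> (\<forall>k<length a. a ! k \<le> b ! k)"

definition bless :: "nat list \<Rightarrow> nat list \<Rightarrow> bool" where
  "bless a b \<longleftrightarrow> bleq a b \<and> a \<noteq> b"

definition interval :: "nat \<Rightarrow> nat \<Rightarrow> nat list \<Rightarrow> nat list \<Rightarrow> nat list set" where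
  "interval d n a b = {x \<in> Idn d n. bleq a x \<and> bleq x b}"

text \<open>A maximal chain i_r > ... > i_0, stored as the list [i_0, ..., i_r] (c ! t = i_t):
  a strictly increasing list of elements of I(d,n) whose underlying set is a maximal
  totally ordered subset.\<close>
definition maxchain :: "nat \<Rightarrow> nat \<Rightarrow> nat list list \<Rightarrow> bool" where
  "maxchain d n c \<longleftrightarrow> c \<noteq> [] \<and> set c \<subseteq> Idn d n
     \<and> (\<forall>i. Suc i < length c \<longrightarrow> bless (c ! i) (c ! Suc i))
     \<and> (\<forall>x\<in>Idn d n. (\<forall>y\<in>set c. bleq x y \<or> bleq y x) \<longrightarrow> x \<in> set c)"

definition lexless :: "nat list \<Rightarrow> nat list \<Rightarrow> bool" where
  "lexless xs ys \<longleftrightarrow> (xs, ys) \<in> lexord {(a, b). a < b}"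

definition Cright :: "nat \<Rightarrow> nat \<Rightarrow> nat list list" where
  "Cright d n = (THE c. maxchain d n c \<and>
     (\<forall>c'. maxchain d n c' \<and> c' \<noteq> c \<longrightarrow> lexless (concat (rev c)) (concat (rev c'))))"

definition admissible :: "nat \<Rightarrow> nat \<Rightarrow> nat \<times> nat \<Rightarrow> bool" where
  "admissible d n p \<longleftrightarrow> (case p of (s, h) \<Rightarrow> 1 \<le> h \<and> h \<le> d \<and> h \<le> s \<and> s < n - d + h)"

text \<open>Root operator f_{s,h}; None plays the role of 0. Indices h are 1-based.\<close>
definition froot :: "nat \<Rightarrow> nat \<Rightarrow> nat \<Rightarrow> nat list \<Rightarrow> nat list option" where
  "froot d s h i = (if i ! (h - 1) = s \<and> (h = d \<or> i ! h \<ge> s + 2)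
                    then Some (i[h - 1 := s + 1]) else None)"

definition opof :: "nat \<Rightarrow> nat \<Rightarrow> nat list list \<Rightarrow> nat \<Rightarrow> nat \<times> nat" where
  "opof d n c t = (THE p. admissible d n p \<and> froot d (fst p) (snd p) (c ! (t - 1)) = Some (c ! t))"

definition sigma :: "nat \<Rightarrow> nat \<Rightarrow> nat list list \<Rightarrow> nat \<Rightarrow> nat" where
  "sigma d n c t = (if t \<in> {1..d * (n - d)}
      then (THE u. u \<in> {1..d * (n - d)} \<and> opof d n (Cright d n) u = opof d n c t)
      else t)"

text \<open>Operator F_t on chains-or-zero (None = 0).\<close>
definition Fop :: "nat \<Rightarrow> nat \<Rightarrow> nat \<Rightarrow> nat list list option \<Rightarrow> nat list list option" where
  "Fop d n t oc = (case oc of None \<Rightarrow> None | Some c \<Rightarrow>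
     (if 1 \<le> t \<and> t + 1 < length c then
        (let J = interval d n (c ! (t - 1)) (c ! (t + 1)) in
         if card J = 4 \<and> {c ! (t - 1), c ! t, c ! (t + 1)} \<subseteq> J then
           (let x = (THE x. x \<in> J - {c ! (t - 1), c ! t, c ! (t + 1)}) in
            if lexless (c ! t) x then Some (c[t := x]) else None)
         else None)
      else None))"

definition Fs :: "nat \<Rightarrow> nat \<Rightarrow> nat list \<Rightarrow> nat list list option \<Rightarrow> nat list list option" where
  "Fs d n ts oc = foldr (Fop d n) ts oc"

definition stp :: "nat \<Rightarrow> nat \<Rightarrow> nat" where
  "stp t = (\<lambda>x. if x = t then t + 1 else if x = t + 1 then t else x)"

text \<open>For ts = [t_1,...,t_k], the product s_{t_k} s_{t_{k-1}} ... s_{t_1} (function composition).\<close>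
definition wordprod :: "nat list \<Rightarrow> nat \<Rightarrow> nat" where
  "wordprod ts = fold (\<lambda>t acc. stp t \<circ> acc) ts id"

definition reduced :: "nat \<Rightarrow> nat list \<Rightarrow> bool" where
  "reduced r ts \<longleftrightarrow> set ts \<subseteq> {1..r - 1} \<and>
     (\<forall>us. set us \<subseteq> {1..r - 1} \<and> wordprod us = wordprod ts \<longrightarrow> length ts \<le> length us)"

end

(*
  Every cover step of I(d,n) raises one entry of the sequence by one, so the entry sum is a
  rank function, maximal chains are the saturated chains from [1..d] to [n-d+1..n], and the
  step from c!(t-1) to c!t is the root operator f_{s,h} whose h is the raised position.
  F_t is nonzero only if the two steps at t, t+1 raise positions h, h' with h' < h, and then
  it exchanges them, which composes sigma with s_t.  Along C_right the raised position
  never increases, for otherwise exchanging the two steps would give a lexicographically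
  smaller maximal chain.  Hence before each application of F_t the current permutation w has
  w t < w (t+1), so every letter of the word adds an inversion; since a product of k simple
  transpositions has at most k inversions, the word is reduced.
*)
theory Submission
  imports Defs "HOL-Library.List_Lexorder"
begin

lemma lexless_iff_less: "lexless xs ys \<longleftrightarrow> xs < ys"
  by (simp add: lexless_def list_less_def)

text \<open>When defined, bump a k is the image of a under the root operator f_{a!k, k+1}: positions
  are 0-based here but 1-based in froot.\<close>
definition bump :: "nat list \<Rightarrow> nat \<Rightarrow> nat list" where
  "bump a k = a[k := Suc (a ! k)]"

lemma length_bump [simp]: "length (bump a k) = length a"
  by (simp add: bump_def)

lemma nth_bump: "k < length a \<Longrightarrow> bump a k ! i = (if i = k then Suc (a ! k) else a ! i)"
  by (simp add: bump_def nth_list_update)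

lemma bump_commute: "bump (bump a h) h' = bump (bump a h') h" if "h \<noteq> h'"
  using that unfolding bump_def by (cases "h < length a"; cases "h' < length a") (auto simp: list_update_swap)

lemma sum_list_bump: "k < length a \<Longrightarrow> sum_list (bump a k) = Suc (sum_list a)"
  unfolding bump_def by (simp add: sum_list_update elem_le_sum_list)

lemma bump_less_bump: "h' < h \<Longrightarrow> h < length a \<Longrightarrow> bump a h < bump a h'"
  unfolding list_less_def lexord_take_index_conv
  by (intro disjI2 exI[of _ h']) (simp add: bump_def nth_bump)

subsection \<open>The Bruhat order\<close>

lemma bleq_refl: "bleq a a"
  by (simp add: bleq_def)

lemma bleq_trans: "bleq a b \<Longrightarrow> bleq b c \<Longrightarrow> bleq a c"
  unfolding bleq_def by (metis le_trans)

lemma bleq_sum_list_le: "bleq a b \<Longrightarrow> sum_list a \<le> sum_list b"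
  unfolding bleq_def by (intro sum_list_mono2) auto

lemma bleq_neq_imp_nth_less: "bleq a b \<Longrightarrow> a \<noteq> b \<Longrightarrow> \<exists>k<length a. a ! k < b ! k"
  unfolding bleq_def by (metis le_neq_implies_less nth_equalityI)

lemma bless_sum_list_less:
  assumes "bless a b" shows "sum_list a < sum_list b"
proof -
  from assms obtain k where "k < length a" "a ! k < b ! k"
    using bleq_neq_imp_nth_less unfolding bless_def by blast
  moreover from assms have "length a = length b" "\<forall>i<length a. a ! i \<le> b ! i"
    unfolding bless_def bleq_def by auto
  ultimately show ?thesis
    unfolding sum_list_sum_nth by (metis atLeastLessThan_iff finite_atLeastLessThan sum_strict_mono_ex1 zero_le)
qed

lemma bleq_sum_list_eq_imp_eq: "bleq a b \<Longrightarrow> sum_list a = sum_list b \<Longrightarrow> a = b"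
  using bless_sum_list_less unfolding bless_def by fastforce

lemma bleq_antisym: "bleq a b \<Longrightarrow> bleq b a \<Longrightarrow> a = b"
  by (meson bleq_sum_list_eq_imp_eq bleq_sum_list_le le_antisym)

lemma bleq_bump: "k < length a \<Longrightarrow> bleq a (bump a k)"
  by (simp add: bleq_def nth_bump)

lemma bless_bump: "k < length a \<Longrightarrow> bless a (bump a k)"
  by (metis bleq_bump bless_def n_not_Suc_n sum_list_bump)

lemma bleq_sum_list_Suc_imp_bump:
  assumes "bleq a x" "sum_list x = Suc (sum_list a)"
  shows "\<exists>k<length a. x = bump a k"
proof -
  obtain k where k: "k < length a" "a ! k < x ! k"
    using bleq_neq_imp_nth_less assms by force
  have "bleq (bump a k) x"
    using assms(1) k unfolding bleq_def by (auto simp: nth_bump)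
  then show ?thesis
    using bleq_sum_list_eq_imp_eq k assms(2) sum_list_bump by metis
qed

subsection \<open>The poset I(d,n)\<close>

lemma Idn_iff_nth: "a \<in> Idn d n \<longleftrightarrow> length a = d \<and> (\<forall>i. Suc i < d \<longrightarrow> a ! i < a ! Suc i)
   \<and> (\<forall>i<d. 1 \<le> a ! i \<and> a ! i \<le> n)"
proof -
  have "sorted_wrt (<) a \<longleftrightarrow> (\<forall>i. Suc i < length a \<longrightarrow> a ! i < a ! Suc i)"
    by (rule sorted_wrt_iff_nth_Suc_transp) (simp add: transp_def)
  moreover have "set a \<subseteq> {1..n} \<longleftrightarrow> (\<forall>i<length a. 1 \<le> a ! i \<and> a ! i \<le> n)"
    by (simp add: subset_code(1) all_set_conv_all_nth)
  ultimately show ?thesis unfolding Idn_def by auto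
qed

lemma Idn_length: "a \<in> Idn d n \<Longrightarrow> length a = d"
  by (simp add: Idn_def)

lemma Idn_nth_gap:
  assumes "a \<in> Idn d n" "i \<le> j" "j < d" shows "a ! i + (j - i) \<le> a ! j"
  using assms(2,3)
proof (induction j)
  case (Suc j)
  show ?case
  proof (cases "i = Suc j")
    case False
    then have "i \<le> j" "a ! i + (j - i) \<le> a ! j"
      using Suc by simp_all
    moreover have "a ! j < a ! Suc j"
      using assms(1) Suc(3) unfolding Idn_iff_nth by blast
    ultimately show ?thesis by simp
  qed simp
qed simp

lemma Idn_nth_lower: "a \<in> Idn d n \<Longrightarrow> k < d \<Longrightarrow> Suc k \<le> a ! k"
  using Idn_nth_gap[of a d n 0 k] unfolding Idn_iff_nth by fastforce

lemma Idn_nth_upper: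
  assumes "a \<in> Idn d n" "k < d" shows "a ! k + (d - Suc k) \<le> n"
proof -
  have "a ! (d - 1) \<le> n"
    using assms unfolding Idn_iff_nth by auto
  moreover have "a ! k + (d - 1 - k) \<le> a ! (d - 1)"
    using Idn_nth_gap[OF assms(1), of k "d - 1"] assms by simp
  ultimately show ?thesis by arith
qed

lemma finite_Idn: "finite (Idn d n)"
proof -
  have "Idn d n \<subseteq> {xs. set xs \<subseteq> {1..n} \<and> length xs \<le> d}"
    unfolding Idn_def by auto
  then show ?thesis
    using finite_lists_length_le[of "{1..n}" d] finite_subset by blast
qed

lemma bump_in_Idn:
  assumes a: "a \<in> Idn d n" and k: "k < d"
    and gap: "Suc k < d \<Longrightarrow> Suc (a ! k) < a ! Suc k" and bound: "Suc (a ! k) \<le> n"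
  shows "bump a k \<in> Idn d n"
  unfolding Idn_iff_nth
proof (intro conjI allI impI)
  have len: "length a = d"
    using a Idn_length by simp
  then show "length (bump a k) = d" by simp
  fix i
  show "bump a k ! i < bump a k ! Suc i" if "Suc i < d"
  proof -
    have "a ! i < a ! Suc i"
      using a that unfolding Idn_iff_nth by blast
    then show ?thesis
      using gap that len k by (cases "i = k"; cases "Suc i = k") (simp_all add: nth_bump)
  qed
  show "1 \<le> bump a k ! i" "bump a k ! i \<le> n" if "i < d"
    using a bound that len k unfolding Idn_iff_nth by (simp_all add: nth_bump)
qed

definition bot_seq :: "nat \<Rightarrow> nat list" where
  "bot_seq d = map Suc [0..<d]"

definition top_seq :: "nat \<Rightarrow> nat \<Rightarrow> nat list" where
  "top_seq d n = map (\<lambda>k. Suc k + (n - d)) [0..<d]"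

lemma bot_seq_in_Idn: "d \<le> n \<Longrightarrow> bot_seq d \<in> Idn d n"
  unfolding Idn_iff_nth bot_seq_def by auto

lemma top_seq_in_Idn: "d \<le> n \<Longrightarrow> top_seq d n \<in> Idn d n"
  unfolding Idn_iff_nth top_seq_def by auto

lemma bot_seq_bleq: "a \<in> Idn d n \<Longrightarrow> bleq (bot_seq d) a"
  unfolding bleq_def bot_seq_def using Idn_nth_lower Idn_length by auto

lemma bleq_top_seq: "a \<in> Idn d n \<Longrightarrow> bleq a (top_seq d n)"
  unfolding bleq_def top_seq_def using Idn_nth_upper Idn_length by fastforce

lemma sum_list_top_seq: "sum_list (top_seq d n) = sum_list (bot_seq d) + d * (n - d)"
proof -
  have "sum_list (map (\<lambda>k. Suc k + c) xs) = sum_list (map Suc xs) + length xs * c" for xs c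
    by (induction xs) simp_all
  then show ?thesis
    unfolding top_seq_def bot_seq_def by simp
qed

lemma bless_imp_bump_bleq:
  assumes "a \<in> Idn d n" "b \<in> Idn d n" "bless a b"
  shows "\<exists>k<d. bump a k \<in> Idn d n \<and> bleq (bump a k) b"
proof -
  have len: "length a = d" "length b = d"
    using assms Idn_length by auto
  \<comment> \<open>raise the last position where a is strictly below b\<close>
  define S where "S = {k. k < d \<and> a ! k < b ! k}"
  have "S \<noteq> {}" "finite S"
    using bleq_neq_imp_nth_less assms(3) len unfolding bless_def S_def by auto
  define k where "k = Max S"
  have k: "k < d" "a ! k < b ! k"
    using Max_in[OF \<open>finite S\<close> \<open>S \<noteq> {}\<close>] unfolding k_def S_def by auto
  have above_k: "a ! j = b ! j" if "j < d" "k < j" for j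
  proof -
    have "j \<notin> S"
      using that Max_ge[OF \<open>finite S\<close>, of j] unfolding k_def by auto
    moreover have "a ! j \<le> b ! j"
      using assms(3) that len unfolding bless_def bleq_def by auto
    ultimately show ?thesis
      using that unfolding S_def by simp
  qed
  have "bump a k \<in> Idn d n"
  proof (rule bump_in_Idn[OF assms(1) k(1)])
    show "Suc (a ! k) < a ! Suc k" if "Suc k < d"
      using above_k[of "Suc k"] assms(2) that k unfolding Idn_iff_nth by fastforce
    show "Suc (a ! k) \<le> n"
      using k assms(2) unfolding Idn_iff_nth by fastforce
  qed
  moreover have "bleq (bump a k) b"
    using assms(3) k len unfolding bless_def bleq_def by (auto simp: nth_bump)
  ultimately show ?thesis
    using k by blast
qed

lemma bleq_sum_list_Suc_imp_bump_Idn: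
  assumes "bleq a b" "sum_list b = Suc (sum_list a)" "b \<in> Idn d n"
  shows "\<exists>k<d. b = bump a k"
  using bleq_sum_list_Suc_imp_bump[OF assms(1,2)] assms(1,3) Idn_length unfolding bleq_def by metis

subsection \<open>Maximal chains\<close>

definition saturated :: "nat \<Rightarrow> nat list list \<Rightarrow> bool" where
  "saturated d c \<longleftrightarrow> (\<forall>i. Suc i < length c \<longrightarrow> (\<exists>k<d. c ! Suc i = bump (c ! i) k))"

lemma saturated_sum_list:
  assumes "saturated d c" "set c \<subseteq> Idn d n" "i \<le> j" "j < length c"
  shows "sum_list (c ! j) = sum_list (c ! i) + (j - i)"
  using assms(3,4)
proof (induction j)
  case (Suc j)
  show ?case
  proof (cases "i = Suc j")
    case False
    have "c ! j \<in> Idn d n"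
      using assms(2) Suc(3) by (simp add: subset_iff)
    then have "length (c ! j) = d"
      by (rule Idn_length)
    moreover obtain k where "k < d" "c ! Suc j = bump (c ! j) k"
      using assms(1) Suc(3) unfolding saturated_def by blast
    ultimately show ?thesis
      using Suc False sum_list_bump by simp
  qed simp
qed simp

lemma maxchain_set: "maxchain d n c \<Longrightarrow> set c \<subseteq> Idn d n"
  by (simp add: maxchain_def)

lemma maxchain_nth_in_Idn: "maxchain d n c \<Longrightarrow> i < length c \<Longrightarrow> c ! i \<in> Idn d n"
  by (simp add: maxchain_def subset_iff)

lemma maxchain_nth_length: "maxchain d n c \<Longrightarrow> i < length c \<Longrightarrow> length (c ! i) = d"
  using maxchain_nth_in_Idn Idn_length by blast

lemma maxchain_bleq_nth:
  assumes "maxchain d n c" "i \<le> j" "j < length c"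
  shows "bleq (c ! i) (c ! j)"
  using assms(2,3)
proof (induction j)
  case (Suc j)
  show ?case
  proof (cases "i = Suc j")
    case False
    then have "bleq (c ! i) (c ! j)"
      using Suc by simp
    moreover have "bless (c ! j) (c ! Suc j)"
      using assms(1) Suc(3) unfolding maxchain_def by blast
    ultimately show ?thesis
      using bleq_trans unfolding bless_def by blast
  qed (simp add: bleq_refl)
qed (simp add: bleq_refl)

lemma maxchain_between_mem:
  assumes mc: "maxchain d n c" and i: "Suc i < length c"
    and y: "y \<in> Idn d n" "bleq (c ! i) y" "bleq y (c ! Suc i)"
  shows "y \<in> set c"
proof -
  have "bleq y z \<or> bleq z y" if "z \<in> set c" for z
  proof -
    obtain j where j: "j < length c" "z = c ! j"
      using \<open>z \<in> set c\<close> by (auto simp: in_set_conv_nth)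
    show ?thesis
    proof (cases "j \<le> i")
      case True
      then show ?thesis
        using maxchain_bleq_nth[OF mc True] i j y(2) bleq_trans by auto
    next
      case False
      then show ?thesis
        using maxchain_bleq_nth[OF mc, of "Suc i" j] j y(3) bleq_trans by auto
    qed
  qed
  then show ?thesis
    using mc y(1) unfolding maxchain_def by blast
qed

lemma maxchain_Suc_eq_bump:
  assumes mc: "maxchain d n c" and i: "Suc i < length c"
  shows "\<exists>k<d. c ! Suc i = bump (c ! i) k"
proof -
  define a where "a = c ! i"
  define b where "b = c ! Suc i"
  have ab: "a \<in> Idn d n" "b \<in> Idn d n" "bless a b"
    using mc i maxchain_nth_in_Idn unfolding maxchain_def a_def b_def by auto
  obtain k where k: "k < d" "bump a k \<in> Idn d n" "bleq (bump a k) b"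
    using bless_imp_bump_bleq[OF ab] by blast
  have len: "length a = d"
    using ab Idn_length by simp
  have "bump a k \<in> set c"
    using maxchain_between_mem[OF mc i k(2)] bleq_bump[of k a] k(1,3) len unfolding a_def b_def by simp
  then obtain j where j: "j < length c" "bump a k = c ! j"
    by (auto simp: in_set_conv_nth)
  have "\<not> j \<le> i"
  proof
    assume "j \<le> i"
    then have "sum_list (bump a k) \<le> sum_list a"
      using bleq_sum_list_le maxchain_bleq_nth[OF mc, of j i] i j unfolding a_def by simp
    then show False
      using sum_list_bump k(1) len by simp
  qed
  then have "bleq b (bump a k)"
    using maxchain_bleq_nth[OF mc, of "Suc i" j] j unfolding b_def by simp
  then show ?thesis
    using bleq_antisym k unfolding a_def b_def by metis
qed

lemma maxchain_saturated: "maxchain d n c \<Longrightarrow> saturated d c"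
  unfolding saturated_def using maxchain_Suc_eq_bump by blast

lemma maxchain_first:
  assumes mc: "maxchain d n c" and "d \<le> n"
  shows "c ! 0 = bot_seq d"
proof -
  have "\<forall>y\<in>set c. bleq (bot_seq d) y \<or> bleq y (bot_seq d)"
    using bot_seq_bleq maxchain_set[OF mc] by blast
  then have "bot_seq d \<in> set c"
    using mc bot_seq_in_Idn[OF \<open>d \<le> n\<close>] unfolding maxchain_def by blast
  then obtain i where i: "i < length c" "c ! i = bot_seq d"
    by (auto simp: in_set_conv_nth)
  have "bleq (c ! 0) (bot_seq d)"
    using maxchain_bleq_nth[OF mc, of 0 i] i by simp
  moreover have "bleq (bot_seq d) (c ! 0)"
    using bot_seq_bleq[OF maxchain_nth_in_Idn[OF mc, of 0]] i by (cases c) auto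
  ultimately show ?thesis
    by (rule bleq_antisym)
qed

lemma maxchain_last:
  assumes mc: "maxchain d n c" and "d \<le> n"
  shows "c ! (length c - 1) = top_seq d n"
proof -
  have "\<forall>y\<in>set c. bleq (top_seq d n) y \<or> bleq y (top_seq d n)"
    using bleq_top_seq maxchain_set[OF mc] by blast
  then have "top_seq d n \<in> set c"
    using mc top_seq_in_Idn[OF \<open>d \<le> n\<close>] unfolding maxchain_def by blast
  then obtain i where i: "i < length c" "c ! i = top_seq d n"
    by (auto simp: in_set_conv_nth)
  have "bleq (c ! (length c - 1)) (top_seq d n)"
    using bleq_top_seq[OF maxchain_nth_in_Idn[OF mc, of "length c - 1"]] i by simp
  moreover have "bleq (top_seq d n) (c ! (length c - 1))"
    using maxchain_bleq_nth[OF mc, of i "length c - 1"] i by simp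
  ultimately show ?thesis
    by (rule bleq_antisym)
qed

lemma length_maxchain:
  assumes mc: "maxchain d n c" and "d \<le> n"
  shows "length c = Suc (d * (n - d))"
proof -
  have "c \<noteq> []"
    using mc unfolding maxchain_def by simp
  then show ?thesis
    using saturated_sum_list[OF maxchain_saturated[OF mc] maxchain_set[OF mc], of 0 "length c - 1"]
      maxchain_first[OF assms] maxchain_last[OF assms] sum_list_top_seq by simp
qed

lemma saturated_chain_to_top:
  assumes "d \<le> n"
  shows "a \<in> Idn d n \<Longrightarrow>
    \<exists>c. c \<noteq> [] \<and> c ! 0 = a \<and> set c \<subseteq> Idn d n \<and> saturated d c \<and> last c = top_seq d n"
proof (induction "sum_list (top_seq d n) - sum_list a" arbitrary: a rule: less_induct)
  case less
  show ?case
  proof (cases "a = top_seq d n")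
    case True
    then show ?thesis
      using less.prems by (intro exI[of _ "[a]"]) (simp add: saturated_def)
  next
    case False
    then have "bless a (top_seq d n)"
      using bleq_top_seq less.prems unfolding bless_def by simp
    then obtain k where k: "k < d" "bump a k \<in> Idn d n" "bleq (bump a k) (top_seq d n)"
      using bless_imp_bump_bleq[OF less.prems top_seq_in_Idn[OF assms]] by blast
    have "length a = d"
      using less.prems Idn_length by simp
    then have "sum_list (top_seq d n) - sum_list (bump a k) < sum_list (top_seq d n) - sum_list a"
      using bleq_sum_list_le[OF k(3)] sum_list_bump k(1) by simp
    then obtain c where c: "c \<noteq> []" "c ! 0 = bump a k" "set c \<subseteq> Idn d n" "saturated d c"
        "last c = top_seq d n"
      using less.hyps k by blast
    have "saturated d (a # c)"
      unfolding saturated_def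
    proof (intro allI impI)
      fix i
      assume "Suc i < length (a # c)"
      then show "\<exists>k<d. (a # c) ! Suc i = bump ((a # c) ! i) k"
        using c(2,4) k(1) unfolding saturated_def by (cases i) auto
    qed
    then show ?thesis
      using c less.prems by (intro exI[of _ "a # c"]) auto
  qed
qed

lemma saturated_imp_maxchain:
  assumes "d \<le> n" and c: "c \<noteq> []" "c ! 0 = bot_seq d" "set c \<subseteq> Idn d n" "saturated d c"
    "last c = top_seq d n"
  shows "maxchain d n c"
proof -
  have sum_nth: "sum_list (c ! j) = sum_list (bot_seq d) + j" if "j < length c" for j
    using saturated_sum_list[OF c(4) c(3), of 0 j] c(2) that by simp
  have len: "length c - 1 = d * (n - d)"
    using sum_nth[of "length c - 1"] c(1,5) sum_list_top_seq by (simp add: last_conv_nth)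
  have "bless (c ! i) (c ! Suc i)" if i: "Suc i < length c" for i
  proof -
    obtain k where "k < d" "c ! Suc i = bump (c ! i) k"
      using c(4) i unfolding saturated_def by blast
    moreover have "length (c ! i) = d"
      using c(3) i Idn_length nth_mem by (metis Suc_lessD subsetD)
    ultimately show ?thesis
      using bless_bump by simp
  qed
  moreover have "x \<in> set c" if x: "x \<in> Idn d n" and cmp: "\<forall>y\<in>set c. bleq x y \<or> bleq y x" for x
  proof -
    \<comment> \<open>c meets every value of sum_list in range; comparable elements of equal sum coincide\<close>
    define m where "m = sum_list x - sum_list (bot_seq d)"
    have low: "sum_list (bot_seq d) \<le> sum_list x"
      and high: "sum_list x \<le> sum_list (bot_seq d) + d * (n - d)"
      using bleq_sum_list_le[OF bot_seq_bleq[OF x]] bleq_sum_list_le[OF bleq_top_seq[OF x]]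
        sum_list_top_seq by simp_all
    have "0 < length c"
      using c(1) by simp
    then have m: "m < length c"
      using len high unfolding m_def by arith
    have sum_m: "sum_list (c ! m) = sum_list x"
      using sum_nth[OF m] low unfolding m_def by simp
    have "bleq x (c ! m) \<or> bleq (c ! m) x"
      using cmp m by simp
    then show ?thesis
      using m sum_m bleq_sum_list_eq_imp_eq by (metis nth_mem)
  qed
  ultimately show ?thesis
    unfolding maxchain_def using c by blast
qed

lemma maxchain_exists: "d \<le> n \<Longrightarrow> \<exists>c. maxchain d n c"
  using saturated_chain_to_top bot_seq_in_Idn saturated_imp_maxchain by metis

lemma finite_maxchains:
  assumes "d \<le> n" shows "finite {c. maxchain d n c}"
proof -
  have "{c. maxchain d n c} \<subseteq> {c. set c \<subseteq> Idn d n \<and> length c = Suc (d * (n - d))}"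
    using maxchain_set length_maxchain[OF _ assms] by blast
  then show ?thesis
    using finite_lists_length_eq[OF finite_Idn] by (rule finite_subset)
qed

lemma saturated_list_update:
  assumes sat: "saturated d c" and set_c: "set c \<subseteq> Idn d n" and t: "1 \<le> t" "Suc t < length c"
    and x: "x \<in> Idn d n" "bleq (c ! (t - 1)) x" "bleq x (c ! Suc t)"
    "sum_list x = Suc (sum_list (c ! (t - 1)))"
  shows "saturated d (c[t := x])"
  unfolding saturated_def
proof (intro allI impI)
  fix i
  assume i: "Suc i < length (c[t := x])"
  consider "Suc i = t" | "i = t" | "Suc i \<noteq> t" "i \<noteq> t"
    by blast
  then show "\<exists>k<d. c[t := x] ! Suc i = bump (c[t := x] ! i) k"
  proof cases
    case 1
    then have "c[t := x] ! Suc i = x" "c[t := x] ! i = c ! (t - 1)"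
      using i by auto
    then show ?thesis
      using bleq_sum_list_Suc_imp_bump_Idn[OF x(2,4,1)] by simp
  next
    case 2
    have "sum_list (c ! Suc t) = Suc (sum_list x)"
      using saturated_sum_list[OF sat set_c, of "t - 1" "Suc t"] x(4) t by simp
    moreover have "c ! Suc t \<in> Idn d n"
      using set_c t by (simp add: subset_iff)
    ultimately show ?thesis
      using bleq_sum_list_Suc_imp_bump_Idn[OF x(3)] 2 t by simp
  next
    case 3
    then show ?thesis
      using sat i unfolding saturated_def by simp
  qed
qed

lemma maxchain_list_update:
  assumes "d \<le> n" and mc: "maxchain d n c" and t: "1 \<le> t" "Suc t < length c"
    and x: "x \<in> Idn d n" "bless (c ! (t - 1)) x" "bless x (c ! Suc t)"
  shows "maxchain d n (c[t := x])"
proof -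
  have sat: "saturated d c" and set_c: "set c \<subseteq> Idn d n"
    using mc maxchain_saturated maxchain_set by auto
  have "sum_list x = Suc (sum_list (c ! (t - 1)))"
    using bless_sum_list_less[OF x(2)] bless_sum_list_less[OF x(3)]
      saturated_sum_list[OF sat set_c, of "t - 1" "Suc t"] t by simp
  then have "saturated d (c[t := x])"
    using saturated_list_update[OF sat set_c t x(1)] x(2,3) unfolding bless_def by simp
  moreover have "c \<noteq> []" "c[t := x] ! 0 = bot_seq d"
    using t maxchain_first[OF mc assms(1)] by auto
  moreover have "last (c[t := x]) = top_seq d n"
    using t \<open>c \<noteq> []\<close> maxchain_last[OF mc assms(1)] by (simp add: last_list_update last_conv_nth)
  moreover have "set (c[t := x]) \<subseteq> Idn d n"
    using set_c x(1) by (meson insert_subset order_trans set_update_subset_insert)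
  ultimately show ?thesis
    using saturated_imp_maxchain[OF assms(1)] by simp
qed

subsection \<open>Root operators along a maximal chain\<close>

lemma froot_bump:
  assumes a: "a \<in> Idn d n" and k: "k < d" and ak: "bump a k \<in> Idn d n"
  shows "admissible d n (a ! k, Suc k) \<and> froot d (a ! k) (Suc k) a = Some (bump a k)"
proof -
  have len: "length a = d"
    using a Idn_length by simp
  have "Suc (a ! k) + (d - Suc k) \<le> n"
    using Idn_nth_upper[OF ak k] k len by (simp add: nth_bump)
  then have "admissible d n (a ! k, Suc k)"
    using Idn_nth_lower[OF a k] k unfolding admissible_def by simp
  moreover have "Suc k = d \<or> a ! k + 2 \<le> a ! Suc k"
  proof (cases "Suc k < d")
    case True
    then have "bump a k ! k < bump a k ! Suc k"
      using ak unfolding Idn_iff_nth by blast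
    then show ?thesis
      using True len by (simp add: nth_bump)
  qed (use k in simp)
  ultimately show ?thesis
    unfolding froot_def bump_def by simp
qed

lemma froot_eq_Some_bump:
  assumes len: "length a = d" and k: "k < d"
    and sh: "admissible d n (s, h)" "froot d s h a = Some (bump a k)"
  shows "(s, h) = (a ! k, Suc k)"
proof -
  have h: "1 \<le> h" "h \<le> d"
    using sh(1) unfolding admissible_def by auto
  have fr: "a ! (h - 1) = s" "a[h - 1 := s + 1] = bump a k"
    using sh(2) unfolding froot_def by (auto split: if_splits)
  have "h - 1 = k"
  proof (rule ccontr)
    assume "h - 1 \<noteq> k"
    then have "a[h - 1 := s + 1] ! k = a ! k"
      by simp
    then show False
      using fr k len by (simp add: nth_bump)
  qed
  then show ?thesis
    using fr h by auto
qed

lemma opof_bump: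
  assumes a: "a \<in> Idn d n" and k: "k < d" and ak: "bump a k \<in> Idn d n"
    and c: "c ! (t - 1) = a" "c ! t = bump a k"
  shows "opof d n c t = (a ! k, Suc k)"
  unfolding opof_def c
proof (rule the_equality)
  show "admissible d n (a ! k, Suc k) \<and>
      froot d (fst (a ! k, Suc k)) (snd (a ! k, Suc k)) a = Some (bump a k)"
    using froot_bump[OF a k ak] by simp
  show "p = (a ! k, Suc k)" if "admissible d n p \<and> froot d (fst p) (snd p) a = Some (bump a k)" for p
    using froot_eq_Some_bump[OF Idn_length[OF a] k, of n "fst p" "snd p"] that by simp
qed

lemma maxchain_opof:
  assumes mc: "maxchain d n c" and u: "1 \<le> u" "u < length c"
  shows "\<exists>k<d. c ! u = bump (c ! (u - 1)) k \<and> opof d n c u = (c ! (u - 1) ! k, Suc k)"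
proof -
  obtain k where k: "k < d" "c ! u = bump (c ! (u - 1)) k"
    using maxchain_Suc_eq_bump[OF mc, of "u - 1"] u by auto
  moreover have "c ! (u - 1) \<in> Idn d n" "c ! u \<in> Idn d n"
    using maxchain_nth_in_Idn[OF mc] u by simp_all
  ultimately show ?thesis
    using opof_bump[of "c ! (u - 1)" d n k c u] by auto
qed

lemma maxchain_opof_inj:
  assumes mc: "maxchain d n c"
  shows "inj_on (opof d n c) {1..<length c}"
proof -
  \<comment> \<open>after step u the raised entry exceeds s, so f_{s,h} cannot act again further up\<close>
  have neq: "opof d n c u \<noteq> opof d n c u'" if u: "1 \<le> u" "u < u'" "u' < length c" for u u'
  proof
    assume eq: "opof d n c u = opof d n c u'"
    obtain k where k: "k < d" "c ! u = bump (c ! (u - 1)) k" "opof d n c u = (c ! (u - 1) ! k, Suc k)"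
      using maxchain_opof[OF mc, of u] u by auto
    obtain k' where "k' < d" "opof d n c u' = (c ! (u' - 1) ! k', Suc k')"
      using maxchain_opof[OF mc, of u'] u by auto
    then have same: "c ! (u' - 1) ! k = c ! (u - 1) ! k"
      using eq k by auto
    have "length (c ! (u - 1)) = d"
      using maxchain_nth_length[OF mc, of "u - 1"] u by simp
    then have "c ! u ! k = Suc (c ! (u - 1) ! k)"
      using k by (simp add: nth_bump)
    moreover have "c ! u ! k \<le> c ! (u' - 1) ! k"
      using maxchain_bleq_nth[OF mc, of u "u' - 1"] u k(1,2) \<open>length (c ! (u - 1)) = d\<close>
      unfolding bleq_def by simp
    ultimately show False
      using same by simp
  qed
  show ?thesis
  proof (rule inj_onI)
    fix u u'
    assume "u \<in> {1..<length c}" "u' \<in> {1..<length c}" "opof d n c u = opof d n c u'"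
    then show "u = u'"
      using neq[of u u'] neq[of u' u] by (cases u u' rule: linorder_cases) auto
  qed
qed

lemma opof_list_update_other:
  "u \<noteq> t \<Longrightarrow> u \<noteq> Suc t \<Longrightarrow> 1 \<le> t \<Longrightarrow> opof d n (c[t := x]) u = opof d n c u"
  unfolding opof_def by (cases u) auto

lemma bump_square:
  assumes len: "length a = d" and hh': "h < d" "h' < d"
    and x: "bleq a x" "bleq x (bump (bump a h) h')" "x \<noteq> a" "x \<noteq> bump a h"
    "x \<noteq> bump (bump a h) h'"
  shows "x = bump a h' \<and> h \<noteq> h'"
proof -
  let ?e = "bump (bump a h) h'"
  have "sum_list x = Suc (sum_list a)"
    using bless_sum_list_less[of a x] bless_sum_list_less[of x ?e] x len hh'
    unfolding bless_def by (simp add: sum_list_bump)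
  then obtain k where k: "k < d" "x = bump a k"
    using bleq_sum_list_Suc_imp_bump[OF x(1)] len by blast
  have "k = h'"
  proof (rule ccontr)
    assume "k \<noteq> h'"
    moreover have "k \<noteq> h"
      using k x(4) by blast
    ultimately have "?e ! k = a ! k"
      using len hh' by (simp add: nth_bump)
    moreover have "x ! k \<le> ?e ! k"
      using x(2) k len unfolding bleq_def by simp
    ultimately show False
      using k len by (simp add: nth_bump)
  qed
  then show ?thesis
    using k x(4) by blast
qed

lemma the_mem_of_card_1: "card A = 1 \<Longrightarrow> (THE x. x \<in> A) \<in> A"
  by (erule card_1_singletonE) simp

lemma the_fourth_mem:
  assumes "finite J" "card J = 4" "{a, b, e} \<subseteq> J" "distinct [a, b, e]"
  shows "(THE x. x \<in> J - {a, b, e}) \<in> J - {a, b, e}"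
  using assms by (intro the_mem_of_card_1) (simp add: card_Diff_subset card_insert_if)

lemma Fop_SomeE:
  assumes mc: "maxchain d n C" and F: "Fop d n t (Some C) = Some C'"
  obtains h h' where "1 \<le> t" "Suc t < length C" "h' < h" "h < d"
    "C ! t = bump (C ! (t - 1)) h" "C ! Suc t = bump (C ! t) h'"
    "bump (C ! (t - 1)) h' \<in> Idn d n" "C' = C[t := bump (C ! (t - 1)) h']"
proof -
  define a where "a = C ! (t - 1)"
  define b where "b = C ! t"
  define e where "e = C ! (t + 1)"
  define J where "J = interval d n a e"
  define x where "x = (THE x. x \<in> J - {a, b, e})"
  have t: "1 \<le> t" "Suc t < length C" and J: "card J = 4" "{a, b, e} \<subseteq> J"
    and lex: "lexless b x" and C': "C' = C[t := x]"
    using F unfolding Fop_def Let_def a_def b_def e_def J_def x_def by (auto split: if_splits)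
  obtain h h' where h: "h < d" "b = bump a h" and h': "h' < d" "e = bump b h'"
    using maxchain_Suc_eq_bump[OF mc, of "t - 1"] maxchain_Suc_eq_bump[OF mc, of t] t
    unfolding a_def b_def e_def by auto
  have len: "length a = d"
    using maxchain_nth_length[OF mc] t unfolding a_def by simp
  have "sum_list b = Suc (sum_list a)" "sum_list e = Suc (sum_list b)"
    using h h' len sum_list_bump by simp_all
  then have "distinct [a, b, e]"
    by auto
  moreover have "finite J"
    unfolding J_def interval_def by (rule finite_subset[OF _ finite_Idn]) blast
  ultimately have "x \<in> J - {a, b, e}"
    unfolding x_def by (intro the_fourth_mem J)
  then have xJ: "x \<in> Idn d n" "bleq a x" "bleq x e" "x \<notin> {a, b, e}"
    unfolding J_def interval_def by auto
  then have x: "x = bump a h'" "h \<noteq> h'"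
    using bump_square[OF len h(1) h'(1)] h(2) h'(2) by auto
  have "h' < h"
  proof (rule ccontr)
    assume "\<not> h' < h"
    then have "x < b"
      using bump_less_bump[of h h' a] x h(2) h'(1) len by simp
    then show False
      using lex unfolding lexless_iff_less by simp
  qed
  then show thesis
    using that t h h' xJ(1) C' x(1) unfolding a_def b_def e_def by simp
qed

lemma Fop_Some:
  assumes "d \<le> n" and mc: "maxchain d n C" and F: "Fop d n t (Some C) = Some C'"
  shows "maxchain d n C'" and "opof d n C' = opof d n C \<circ> stp t"
    and "snd (opof d n C (Suc t)) < snd (opof d n C t)"
proof -
  define a where "a = C ! (t - 1)"
  obtain h h' where t: "1 \<le> t" "Suc t < length C" and hh': "h' < h" "h < d"
    and b: "C ! t = bump a h" and e: "C ! Suc t = bump (bump a h) h'"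
    and x: "bump a h' \<in> Idn d n" and C': "C' = C[t := bump a h']"
    using Fop_SomeE[OF mc F] unfolding a_def by metis
  have a: "a \<in> Idn d n" and len: "length a = d"
    using maxchain_nth_in_Idn[OF mc] maxchain_nth_length[OF mc] t unfolding a_def by auto
  have e': "C ! Suc t = bump (bump a h') h"
    using e bump_commute hh'(1) by simp
  have b_Idn: "C ! t \<in> Idn d n" and e_Idn: "C ! Suc t \<in> Idn d n"
    using maxchain_nth_in_Idn[OF mc] t by simp_all
  have "opof d n C t = (a ! h, Suc h)"
    using opof_bump[OF a hh'(2) b_Idn[unfolded b] a_def[symmetric] b] .
  moreover have "opof d n C (Suc t) = (C ! t ! h', Suc h')"
    using opof_bump[OF b_Idn _ e_Idn[unfolded e b[symmetric]]] e b hh' by simp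
  then have "opof d n C (Suc t) = (a ! h', Suc h')"
    using b hh' len by (simp add: nth_bump)
  ultimately have opof_C: "opof d n C t = (a ! h, Suc h)" "opof d n C (Suc t) = (a ! h', Suc h')"
    by simp_all
  then show "snd (opof d n C (Suc t)) < snd (opof d n C t)"
    using hh'(1) by simp
  show "maxchain d n C'"
    using maxchain_list_update[OF assms(1) mc t x] bless_bump[of h' a] bless_bump[of h "bump a h'"]
      e' len hh' unfolding C' a_def by simp
  have "opof d n C' t = (a ! h', Suc h')"
    using opof_bump[OF a _ x, of C' t] hh' t unfolding C' a_def by simp
  moreover have "opof d n C' (Suc t) = (a ! h, Suc h)"
    using opof_bump[OF x hh'(2)] maxchain_nth_in_Idn[OF mc, of "Suc t"] t e' hh' len
    unfolding C' by (simp add: nth_bump)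
  ultimately show "opof d n C' = opof d n C \<circ> stp t"
    using opof_C opof_list_update_other[OF _ _ t(1)] unfolding C' stp_def by auto
qed

subsection \<open>The lexicographically smallest chain\<close>

lemma Cright_unique:
  assumes "d \<le> n"
  shows "\<exists>!c. maxchain d n c \<and>
    (\<forall>c'. maxchain d n c' \<and> c' \<noteq> c \<longrightarrow> lexless (concat (rev c)) (concat (rev c')))"
proof -
  let ?S = "{c. maxchain d n c}"
  let ?K = "\<lambda>c. concat (rev c)"
  have inj: "inj_on ?K ?S"
  proof (rule inj_onI)
    fix x y
    assume x: "x \<in> ?S" and y: "y \<in> ?S" and eq: "?K x = ?K y"
    have "length u = d" if "u \<in> set x \<union> set y" for u
      using that maxchain_set[of d n x] maxchain_set[of d n y] x y Idn_length by blast
    moreover have "u \<in> set x" "v \<in> set y" if "(u, v) \<in> set (zip (rev x) (rev y))" for u v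
      using set_zip_leftD[OF that] set_zip_rightD[OF that] by simp_all
    ultimately have "\<forall>(u, v) \<in> set (zip (rev x) (rev y)). length u = length v"
      by fastforce
    then show "x = y"
      using eq x y length_maxchain[OF _ assms] by (simp add: concat_eq_concat_iff)
  qed
  obtain c where c: "c \<in> ?S" "\<not> (\<exists>c'\<in>?S. ?K c' < ?K c)"
    using ex_is_arg_min_if_finite[OF finite_maxchains[OF assms], of ?K] maxchain_exists[OF assms]
    unfolding is_arg_min_def by auto
  have "?K c < ?K c'" if "c' \<in> ?S" "c' \<noteq> c" for c'
  proof -
    have "?K c' \<noteq> ?K c"
      using inj_on_contraD[OF inj that(2)] that(1) c(1) by blast
    then show ?thesis
      using c(2) that(1) by force
  qed
  then show ?thesis
    using c(1) unfolding lexless_iff_less by (auto dest: less_asym)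
qed

lemma maxchain_Cright: "d \<le> n \<Longrightarrow> maxchain d n (Cright d n)"
  using theI'[OF Cright_unique] unfolding Cright_def by blast

lemma Cright_less:
  "d \<le> n \<Longrightarrow> maxchain d n c \<Longrightarrow> c \<noteq> Cright d n \<Longrightarrow> concat (rev (Cright d n)) < concat (rev c)"
  using theI'[OF Cright_unique] unfolding Cright_def lexless_iff_less by blast

lemma bump_in_Idn_of_bump_bump:
  assumes a: "a \<in> Idn d n" and e: "bump (bump a h) h' \<in> Idn d n" and hh': "h < h'" "h' < d"
  shows "bump a h' \<in> Idn d n"
proof (rule bump_in_Idn[OF a hh'(2)])
  let ?e = "bump (bump a h) h'"
  have len: "length a = d"
    using a Idn_length by simp
  have e_h': "?e ! h' = Suc (a ! h')"
    using hh' len by (simp add: nth_bump)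
  show "Suc (a ! h') < a ! Suc h'" if "Suc h' < d"
  proof -
    have "?e ! h' < ?e ! Suc h'"
      using e that unfolding Idn_iff_nth by blast
    moreover have "?e ! Suc h' = a ! Suc h'"
      using hh' len that by (simp add: nth_bump)
    ultimately show ?thesis
      using e_h' by simp
  qed
  show "Suc (a ! h') \<le> n"
    using e hh'(2) e_h' unfolding Idn_iff_nth by metis
qed

lemma concat_rev_list_update_less:
  assumes t: "t < length c" and x: "length x = length (c ! t)" "x < c ! t"
  shows "concat (rev (c[t := x])) < concat (rev c)"
proof -
  define P where "P = concat (rev (drop (Suc t) c))"
  define Q where "Q = concat (rev (take t c))"
  have "concat (rev c) = P @ c ! t @ Q"
    unfolding P_def Q_def by (subst id_take_nth_drop[OF t]) simp
  moreover have "concat (rev (c[t := x])) = P @ x @ Q"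
    unfolding P_def Q_def by (subst upd_conv_take_nth_drop[OF t]) simp
  ultimately show ?thesis
    using x unfolding list_less_def by (simp add: lexord_append_leftI lexord_sufI)
qed

lemma Cright_opof_snd_Suc_le:
  assumes dn: "d \<le> n" and t: "1 \<le> t" "Suc t < length (Cright d n)"
  shows "snd (opof d n (Cright d n) (Suc t)) \<le> snd (opof d n (Cright d n) t)"
proof (rule ccontr)
  let ?C = "Cright d n"
  define a where "a = ?C ! (t - 1)"
  have mc: "maxchain d n ?C"
    using maxchain_Cright[OF dn] .
  obtain h h' where h: "h < d" "?C ! t = bump a h" "opof d n ?C t = (a ! h, Suc h)"
    and h': "h' < d" "?C ! Suc t = bump (?C ! t) h'" "opof d n ?C (Suc t) = (?C ! t ! h', Suc h')"
    using maxchain_opof[OF mc, of t] maxchain_opof[OF mc, of "Suc t"] t unfolding a_def by auto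
  assume "\<not> snd (opof d n ?C (Suc t)) \<le> snd (opof d n ?C t)"
  then have "h < h'"
    using h(3) h'(3) by simp
  have a: "a \<in> Idn d n" and len: "length a = d"
    using maxchain_nth_in_Idn[OF mc] maxchain_nth_length[OF mc] t unfolding a_def by auto
  have e: "?C ! Suc t = bump (bump a h') h"
    using h(2) h'(2) bump_commute \<open>h < h'\<close> by simp
  have x: "bump a h' \<in> Idn d n"
    using bump_in_Idn_of_bump_bump[OF a _ \<open>h < h'\<close> h'(1)] maxchain_nth_in_Idn[OF mc, of "Suc t"]
      h(2) h'(2) t by simp
  \<comment> \<open>exchanging the two steps would give a lexicographically smaller maximal chain\<close>
  have "maxchain d n (?C[t := bump a h'])"
    using maxchain_list_update[OF dn mc t x] bless_bump[of h' a] bless_bump[of h "bump a h'"] e len h(1) h'(1)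
    unfolding a_def by simp
  moreover have "concat (rev (?C[t := bump a h'])) < concat (rev ?C)"
    using concat_rev_list_update_less[of t ?C "bump a h'"] bump_less_bump[OF \<open>h < h'\<close>] h(2) h'(1) len t
    by simp
  ultimately show False
    using Cright_less[OF dn] by (metis less_asym less_irrefl)
qed

lemma Cright_opof_snd_antimono:
  assumes dn: "d \<le> n" and "1 \<le> u" "u \<le> u'" "u' \<le> d * (n - d)"
  shows "snd (opof d n (Cright d n) u') \<le> snd (opof d n (Cright d n) u)"
  using assms(3,4)
proof (induction u' rule: dec_induct)
  case (step m)
  then show ?case
    using Cright_opof_snd_Suc_le[OF dn, of m] assms(2) length_maxchain[OF maxchain_Cright[OF dn] dn]
    by simp
qed simp

lemma Cright_opof_inj:
  assumes "d \<le> n" shows "inj_on (opof d n (Cright d n)) {1..d * (n - d)}"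
  using maxchain_opof_inj[OF maxchain_Cright[OF assms]] length_maxchain[OF maxchain_Cright[OF assms] assms]
  by (simp add: atLeastLessThanSuc_atLeastAtMost)

subsection \<open>Inversions of words in simple transpositions\<close>

definition inversions :: "nat \<Rightarrow> (nat \<Rightarrow> nat) \<Rightarrow> (nat \<times> nat) set" where
  "inversions r f = {(i, j). 1 \<le> i \<and> i < j \<and> j \<le> r \<and> f j < f i}"

lemma finite_inversions: "finite (inversions r f)"
  by (rule finite_subset[of _ "{1..r} \<times> {1..r}"]) (auto simp: inversions_def)

lemma stp_stp [simp]: "stp t (stp t i) = i"
  by (simp add: stp_def)

lemma stp_in_range: "t \<in> {1..<r} \<Longrightarrow> i \<in> {1..r} \<Longrightarrow> stp t i \<in> {1..r}"
  by (auto simp: stp_def)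

lemma stp_out_of_range: "t \<in> {1..<r} \<Longrightarrow> i \<notin> {1..r} \<Longrightarrow> stp t i = i"
  by (auto simp: stp_def)

lemma stp_less_stp: "i < j \<Longrightarrow> (i, j) \<noteq> (t, Suc t) \<Longrightarrow> stp t i < stp t j"
  by (auto simp: stp_def)

lemma wordprod_Nil [simp]: "wordprod [] = id"
  by (simp add: wordprod_def)

lemma wordprod_Cons: "wordprod (t # ts) = wordprod ts \<circ> stp t"
proof -
  let ?F = "\<lambda>t acc. stp t \<circ> acc"
  have "fold ?F ts g = fold ?F ts id \<circ> g" for g :: "nat \<Rightarrow> nat"
  proof (induction ts arbitrary: g)
    case (Cons u us)
    have "fold ?F (u # us) g = fold ?F us id \<circ> (stp u \<circ> g)"
      using Cons[of "stp u \<circ> g"] by (simp only: fold_simps(2))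
    moreover have "fold ?F (u # us) id = fold ?F us id \<circ> stp u"
      using Cons[of "stp u"] by (simp only: fold_simps(2) comp_id)
    ultimately show ?case
      by (simp only: comp_assoc)
  qed simp
  from this[of "stp t"] show ?thesis
    unfolding wordprod_def by simp
qed

lemma wordprod_in_range: "set ts \<subseteq> {1..<r} \<Longrightarrow> i \<in> {1..r} \<Longrightarrow> wordprod ts i \<in> {1..r}"
proof (induction ts arbitrary: i)
  case (Cons t ts)
  then have "stp t i \<in> {1..r}"
    by (intro stp_in_range) simp_all
  then show ?case
    using Cons by (simp add: wordprod_Cons)
qed simp

lemma wordprod_out_of_range: "set ts \<subseteq> {1..<r} \<Longrightarrow> i \<notin> {1..r} \<Longrightarrow> wordprod ts i = i"
proof (induction ts)
  case (Cons t ts)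
  then have "stp t i = i"
    by (intro stp_out_of_range) simp_all
  then show ?case
    using Cons by (simp add: wordprod_Cons)
qed simp

lemma inversions_comp_stp_subset:
  assumes "t \<in> {1..<r}"
  shows "inversions r (f \<circ> stp t) \<subseteq> insert (t, Suc t) ((\<lambda>(i, j). (stp t i, stp t j)) ` inversions r f)"
proof
  fix p
  assume p: "p \<in> inversions r (f \<circ> stp t)"
  obtain i j where ij: "p = (i, j)"
    by (cases p)
  show "p \<in> insert (t, Suc t) ((\<lambda>(i, j). (stp t i, stp t j)) ` inversions r f)"
  proof (cases "p = (t, Suc t)")
    case False
    then have "(stp t i, stp t j) \<in> inversions r f"
      using p ij assms stp_less_stp[of i j t] stp_in_range[OF assms, of i] stp_in_range[OF assms, of j]
      unfolding inversions_def by auto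
    moreover have "p = (\<lambda>(i, j). (stp t i, stp t j)) (stp t i, stp t j)"
      using ij by simp
    ultimately show ?thesis
      by blast
  qed simp
qed

lemma card_inversions_comp_stp_le:
  assumes "t \<in> {1..<r}"
  shows "card (inversions r (f \<circ> stp t)) \<le> Suc (card (inversions r f))"
proof -
  let ?g = "\<lambda>(i, j). (stp t i, stp t j)"
  have "card (inversions r (f \<circ> stp t)) \<le> card (insert (t, Suc t) (?g ` inversions r f))"
    using inversions_comp_stp_subset[OF assms] finite_inversions by (intro card_mono) auto
  also have "\<dots> \<le> Suc (card (?g ` inversions r f))"
    by (rule card_insert_le_m1) (simp_all add: finite_inversions)
  also have "\<dots> \<le> Suc (card (inversions r f))"
    using card_image_le[OF finite_inversions] by simp
  finally show ?thesis .
qed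

lemma inj_stp_pair: "inj (\<lambda>(i, j). (stp t i, stp t j))"
  by (rule injI) (metis (mono_tags, lifting) old.prod.case prod.inject stp_stp surj_pair)

lemma inversions_comp_stp_ascent_supset:
  assumes t: "t \<in> {1..<r}" and asc: "f t < f (Suc t)"
  shows "insert (t, Suc t) ((\<lambda>(i, j). (stp t i, stp t j)) ` inversions r f) \<subseteq> inversions r (f \<circ> stp t)"
proof
  fix p
  assume "p \<in> insert (t, Suc t) ((\<lambda>(i, j). (stp t i, stp t j)) ` inversions r f)"
  then consider "p = (t, Suc t)" | i j where "(i, j) \<in> inversions r f" "p = (stp t i, stp t j)"
    by auto
  then show "p \<in> inversions r (f \<circ> stp t)"
  proof cases
    case 1
    then show ?thesis
      using t asc unfolding inversions_def stp_def by auto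
  next
    case 2
    then have "(i, j) \<noteq> (t, Suc t)"
      using asc unfolding inversions_def by auto
    then show ?thesis
      using 2 stp_less_stp[of i j t] stp_in_range[OF t, of i] stp_in_range[OF t, of j]
      unfolding inversions_def by auto
  qed
qed

lemma card_inversions_comp_stp_ascent:
  assumes t: "t \<in> {1..<r}" and asc: "f t < f (Suc t)"
  shows "Suc (card (inversions r f)) \<le> card (inversions r (f \<circ> stp t))"
proof -
  let ?g = "\<lambda>(i, j). (stp t i, stp t j)"
  have "(t, Suc t) \<notin> ?g ` inversions r f"
  proof
    assume "(t, Suc t) \<in> ?g ` inversions r f"
    then obtain i j where "(i, j) \<in> inversions r f" "stp t i = t" "stp t j = Suc t"
      by auto
    then have "i < j" "i = Suc t" "j = t"
      unfolding inversions_def by (auto dest: arg_cong[of _ _ "stp t"] simp: stp_def split: if_splits)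
    then show False
      by simp
  qed
  then have "Suc (card (?g ` inversions r f)) = card (insert (t, Suc t) (?g ` inversions r f))"
    using finite_inversions by simp
  also have "\<dots> \<le> card (inversions r (f \<circ> stp t))"
    by (rule card_mono[OF finite_inversions inversions_comp_stp_ascent_supset[OF t asc]])
  finally show ?thesis
    using card_image[OF inj_on_subset[OF inj_stp_pair subset_UNIV]] by simp
qed

lemma card_inversions_wordprod_le:
  "set us \<subseteq> {1..<r} \<Longrightarrow> card (inversions r (wordprod us)) \<le> length us"
proof (induction us)
  case Nil
  have "inversions r (wordprod []) = {}"
    unfolding inversions_def by auto
  then show ?case
    by (metis card.empty le_refl list.size(3))
next
  case (Cons u us)
  have "card (inversions r (wordprod (u # us))) \<le> Suc (card (inversions r (wordprod us)))"
    unfolding wordprod_Cons using Cons.prems by (intro card_inversions_comp_stp_le) simp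
  then show ?case
    using Cons by simp
qed

subsection \<open>Iterating the operators F\<close>

lemma Fs_Cons_Some:
  assumes "Fs d n (t # ts) oc = Some C"
  obtains C0 where "Fs d n ts oc = Some C0" and "Fop d n t (Some C0) = Some C"
  using assms unfolding Fs_def by (cases "foldr (Fop d n) ts oc") (auto simp: Fop_def)

lemma Fs_Cright:
  assumes "d \<le> n" and "Fs d n ts (Some (Cright d n)) = Some C"
  shows "maxchain d n C \<and> opof d n C = opof d n (Cright d n) \<circ> wordprod ts"
  using assms(2)
proof (induction ts arbitrary: C)
  case Nil
  then show ?case
    using maxchain_Cright[OF assms(1)] unfolding Fs_def by simp
next
  case (Cons t ts)
  obtain C0 where C0: "Fs d n ts (Some (Cright d n)) = Some C0" and F: "Fop d n t (Some C0) = Some C"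
    using Fs_Cons_Some[OF Cons.prems] .
  then have "maxchain d n C0" "opof d n C0 = opof d n (Cright d n) \<circ> wordprod ts"
    using Cons.IH by auto
  then show ?case
    using Fop_Some[OF assms(1) _ F] by (simp add: wordprod_Cons comp_assoc)
qed

lemma Fs_Cright_length_le_card_inversions:
  assumes dn: "d \<le> n" and ts: "set ts \<subseteq> {1..<d * (n - d)}"
    and "Fs d n ts (Some (Cright d n)) = Some C"
  shows "length ts \<le> card (inversions (d * (n - d)) (wordprod ts))"
  using assms(2,3)
proof (induction ts arbitrary: C)
  case Nil
  then show ?case by simp
next
  case (Cons t ts)
  let ?r = "d * (n - d)" and ?w = "wordprod ts" and ?o = "opof d n (Cright d n)"
  obtain C0 where C0: "Fs d n ts (Some (Cright d n)) = Some C0" and F: "Fop d n t (Some C0) = Some C"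
    using Fs_Cons_Some[OF Cons.prems(2)] .
  have t: "t \<in> {1..<?r}" and ts: "set ts \<subseteq> {1..<?r}"
    using Cons.prems(1) by auto
  have w_range: "?w t \<in> {1..?r}" "?w (Suc t) \<in> {1..?r}"
    using wordprod_in_range[OF ts] t by auto
  have "snd (opof d n C0 (Suc t)) < snd (opof d n C0 t)"
    using Fop_Some(3)[OF dn _ F] Fs_Cright[OF dn C0] by blast
  then have "snd (?o (?w (Suc t))) < snd (?o (?w t))"
    using Fs_Cright[OF dn C0] by simp
  \<comment> \<open>F_t needs h to drop at t, while along C_right h never increases\<close>
  then have "?w t < ?w (Suc t)"
    using Cright_opof_snd_antimono[OF dn, of "?w (Suc t)" "?w t"] w_range by fastforce
  then have "Suc (card (inversions ?r ?w)) \<le> card (inversions ?r (wordprod (t # ts)))"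
    unfolding wordprod_Cons by (rule card_inversions_comp_stp_ascent[OF t])
  then show ?case
    using Cons.IH[OF ts C0] by simp
qed

lemma sigma_eq_wordprod:
  assumes dn: "d \<le> n" and ts: "set ts \<subseteq> {1..<d * (n - d)}"
    and opof_C: "opof d n C = opof d n (Cright d n) \<circ> wordprod ts"
  shows "sigma d n C = wordprod ts"
proof
  fix u
  let ?r = "d * (n - d)"
  show "sigma d n C u = wordprod ts u"
  proof (cases "u \<in> {1..?r}")
    case True
    then have "wordprod ts u \<in> {1..?r}"
      by (rule wordprod_in_range[OF ts])
    then have "(THE v. v \<in> {1..?r} \<and> opof d n (Cright d n) v = opof d n C u) = wordprod ts u"
      using Cright_opof_inj[OF dn] opof_C by (auto intro!: the_equality dest: inj_onD)
    then show ?thesis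
      unfolding sigma_def using True by simp
  next
    case False
    then show ?thesis
      unfolding sigma_def using wordprod_out_of_range[OF ts False] by auto
  qed
qed

lemma reduced_if_length_le_card_inversions:
  assumes "set ts \<subseteq> {1..r - 1}" and "length ts \<le> card (inversions r (wordprod ts))"
  shows "reduced r ts"
proof -
  have "length ts \<le> length us" if "set us \<subseteq> {1..r - 1}" "wordprod us = wordprod ts" for us
    using assms(2) card_inversions_wordprod_le[of us r] that by fastforce
  then show ?thesis
    unfolding reduced_def using assms(1) by blast
qed

theorem proposition2p27:
  fixes d n :: nat and ts :: "nat list" and C :: "nat list list"
  assumes "1 \<le> d" and "d < n"
    and "\<forall>t\<in>set ts. 1 \<le> t \<and> t \<le> d * (n - d) - 1"
    and "Fs d n ts (Some (Cright d n)) = Some C"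
    and "maxchain d n C"
  shows "sigma d n C = wordprod ts \<and> reduced (d * (n - d)) ts"
proof -
  have dn: "d \<le> n"
    using assms(2) by simp
  have ts: "set ts \<subseteq> {1..<d * (n - d)}" and ts': "set ts \<subseteq> {1..d * (n - d) - 1}"
    using assms(3) by fastforce+
  have "sigma d n C = wordprod ts"
    using sigma_eq_wordprod[OF dn ts] Fs_Cright[OF dn assms(4)] by blast
  moreover have "reduced (d * (n - d)) ts"
    using reduced_if_length_le_card_inversions[OF ts']
      Fs_Cright_length_le_card_inversions[OF dn ts assms(4)] by blast
  ultimately show ?thesis ..
qed

end
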